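(* For integers $n\geq 1$ and $r\geq 1$, \[ \sum_{k=0}^n {n \brace k}_r(-1)^{k+r-1}D_{k+r-1}=B_{n-1,r}. \]
   Context: $D_n$ is the $n$-th derangement number. For $r\geq0$, ${n \brace k}_r$ is the $r$-Stirling number of the second kind: the number of partitions of $\{1,\dots,n+r\}$ into $k+r$ nonempty blocks with $1,\dots,r$ in distinct blocks. $B_{n,r}$ is the $r$-Bell number, defined by $\sum_{n\geq0}B_{n,r}\frac{t^n}{n!}=e^{e^t-1+rt}$ (equivalently $B_{n,r}=\sum_k{n\brace k}_r$). *)

theory Defs
  imports "HOL-Combinatorics.Permutations" "HOL-Library.Disjoint_Sets"
begin

definition derangement :: "nat \<Rightarrow> nat" where
  "derangement n = card {p. p permutes {1..n} \<and> (\<forall>x\<in>{1..n}. p x \<noteq> x)}"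

definition r_stirling :: "nat \<Rightarrow> nat \<Rightarrow> nat \<Rightarrow> nat" where
  "r_stirling r n k = card {P. partition_on {1..n+r} P \<and> card P = k + r \<and>
      (\<forall>B\<in>P. \<forall>i\<in>{1..r}. \<forall>j\<in>{1..r}. i \<in> B \<and> j \<in> B \<longrightarrow> i = j)}"

definition r_bell :: "nat \<Rightarrow> nat \<Rightarrow> nat" where
  "r_bell n r = (\<Sum>k\<le>n. r_stirling r n k)"

end

theory Submission
  imports Defs
begin

text \<open>
  Adding the point \<open>n + r\<close> to a partition either creates a new singleton block or joins
  one of the \<open>k + r\<close> existing blocks, so the r-Stirling numbers satisfy
  \<open>S\<^sub>r(n+1, k) = S\<^sub>r(n, k-1) + (k+r) S\<^sub>r(n, k)\<close>. Substituting this into the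
  sum, with \<open>a(p) = (-1)^p D\<^sub>p\<close>, rewrites the left-hand side as
  \<open>\<Sum>\<^sub>k S\<^sub>r(n-1, k) (a(k+r) + (k+r) a(k+r-1))\<close>, and each bracket equals 1 by the
  derangement recurrence \<open>D\<^bsub>p+1\<^esub> = (p+1) D\<^sub>p + (-1)^(p+1)\<close>. That recurrence in turn
  follows from \<open>n! = \<Sum>\<^sub>k C(n,k) D\<^sub>k\<close>, obtained by classifying permutations by their
  set of moved points.
\<close>

section \<open>Derangements\<close>

definition derangements :: "'a set \<Rightarrow> ('a \<Rightarrow> 'a) set" where
  "derangements A = {p. p permutes A \<and> (\<forall>x\<in>A. p x \<noteq> x)}"

lemma card_derangements:
  assumes "finite A"
  shows "card (derangements A) = derangement (card A)"
proof -
  obtain f where "bij_betw f A {1..card A}"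
    using finite_same_card_bij[OF assms, of "{1..card A}"] by auto
  from bij_betw_derangements[OF this] show ?thesis
    unfolding derangements_def derangement_def by (rule bij_betw_same_card)
qed

lemma finite_derangements: "finite A \<Longrightarrow> finite (derangements A)"
  unfolding derangements_def by (rule finite_subset[OF _ finite_permutations]) auto

lemma derangements_moved_points: "p \<in> derangements A \<Longrightarrow> {x. p x \<noteq> x} = A"
  unfolding derangements_def using permutes_not_in by fastforce

lemma permutations_eq_UN_derangements:
  "{p. p permutes A} = (\<Union>B\<in>Pow A. derangements B)"
proof (intro equalityI subsetI)
  fix p assume "p \<in> {p. p permutes A}"
  then have "p permutes A" by simp
  then have "{x. p x \<noteq> x} \<subseteq> A" "p permutes {x. p x \<noteq> x}"
    using permutes_not_in unfolding permutes_def by fastforce+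
  then show "p \<in> (\<Union>B\<in>Pow A. derangements B)"
    unfolding derangements_def by auto
qed (auto simp: derangements_def intro: permutes_subset)

lemma sum_Pow_card_eq_sum_binomial:
  assumes "finite A"
  shows "(\<Sum>B\<in>Pow A. f (card B)) = (\<Sum>k\<le>card A. of_nat (card A choose k) * f k)"
proof -
  have "(\<Sum>B\<in>Pow A. f (card B)) = (\<Sum>k\<le>card A. \<Sum>B\<in>{B \<in> Pow A. card B = k}. f (card B))"
    by (rule sum.group[symmetric]) (use assms card_mono in auto)
  also have "\<dots> = (\<Sum>k\<le>card A. of_nat (card A choose k) * f k)"
    using n_subsets[OF assms] by (intro sum.cong) auto
  finally show ?thesis .
qed

lemma fact_eq_sum_binomial_derangement:
  "fact n = (\<Sum>k\<le>n. (n choose k) * derangement k)"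
proof -
  have "fact n = card {p. p permutes {1..n}}"
    by (simp add: card_permutations)
  also have "\<dots> = (\<Sum>B\<in>Pow {1..n}. card (derangements B))"
    unfolding permutations_eq_UN_derangements
    by (rule card_UN_disjoint)
       (auto intro: finite_derangements finite_subset dest: derangements_moved_points)
  also have "\<dots> = (\<Sum>B\<in>Pow {1..n}. derangement (card B))"
    by (intro sum.cong) (auto intro: card_derangements finite_subset)
  also have "\<dots> = (\<Sum>k\<le>n. (n choose k) * derangement k)"
    using sum_Pow_card_eq_sum_binomial[of "{1..n}" derangement] by simp
  finally show ?thesis .
qed

lemma sum_binomial_derangement_defect:
  assumes "n \<ge> 1"
  shows "(\<Sum>k\<le>n. int (n choose k) * (int (derangement k) - int k * int (derangement (k - 1)))) = 0"
proof -
  obtain m where n: "n = Suc m" using assms by (cases n) auto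
  have fact_int: "(\<Sum>k\<le>l. int (l choose k) * int (derangement k)) = fact l" for l
    using arg_cong[OF fact_eq_sum_binomial_derangement[of l], of int] by simp
  have "(\<Sum>k\<le>n. int (n choose k) * (int k * int (derangement (k - 1))))
      = (\<Sum>k\<le>m. int (Suc m choose Suc k) * (int (Suc k) * int (derangement k)))"
    unfolding n by (subst sum.atMost_Suc_shift) simp
  also have "\<dots> = int (Suc m) * (\<Sum>k\<le>m. int (m choose k) * int (derangement k))"
  proof -
    have "int (Suc m choose Suc k) * int (Suc k) = int (Suc m) * int (m choose k)" for k
      unfolding of_nat_mult[symmetric] Suc_times_binomial_eq ..
    then show ?thesis
      unfolding sum_distrib_left by (intro sum.cong refl) (simp only: mult.assoc[symmetric])
  qed
  also have "\<dots> = fact n"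
    unfolding fact_int n by simp
  finally show ?thesis
    unfolding right_diff_distrib sum_subtractf fact_int by simp
qed

lemma derangement_defect_eq:
  "int (derangement n) - int n * int (derangement (n - 1)) = (-1) ^ n"
proof (induction n rule: less_induct)
  case (less n)
  show ?case
  proof (cases "n = 0")
    case True
    then show ?thesis by (simp add: derangement_def)
  next
    case False
    have "(\<Sum>k<n. int (n choose k) * (int (derangement k) - int k * int (derangement (k - 1))))
        = (\<Sum>k<n. (-1) ^ k * int (n choose k))"
      using less by (simp add: mult.commute)
    moreover have "(\<Sum>k\<le>n. (-1) ^ k * int (n choose k)) = 0"
      using False by (simp add: choose_alternating_sum)
    ultimately show ?thesis
      using sum_binomial_derangement_defect[of n] False
      by (simp add: lessThan_Suc_atMost[symmetric])
  qed
qed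

lemma derangement_Suc:
  "int (derangement (Suc n)) = int (Suc n) * int (derangement n) + (-1) ^ Suc n"
  using derangement_defect_eq[of "Suc n"] by simp

section \<open>Partitions separating a set\<close>

definition separating_partitions :: "'a set \<Rightarrow> 'a set \<Rightarrow> nat \<Rightarrow> 'a set set set" where
  "separating_partitions A R k = {P. partition_on A P \<and> card P = k \<and>
      (\<forall>B\<in>P. \<forall>i\<in>R. \<forall>j\<in>R. i \<in> B \<and> j \<in> B \<longrightarrow> i = j)}"

lemma partition_on_block_unique:
  "partition_on A P \<Longrightarrow> B \<in> P \<Longrightarrow> C \<in> P \<Longrightarrow> x \<in> B \<Longrightarrow> x \<in> C \<Longrightarrow> B = C"
  unfolding partition_on_def disjoint_def by blast

lemma finite_separating_partitions: "finite A \<Longrightarrow> finite (separating_partitions A R k)"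
  unfolding separating_partitions_def
  by (rule finite_subset[OF _ finitely_many_partition_on]) auto

lemma card_partition_on_le:
  assumes "finite A" "partition_on A P"
  shows "card P \<le> card A"
proof -
  have blocks: "p \<noteq> {}" "finite p" if "p \<in> P" for p
  proof -
    show "p \<noteq> {}" using that partition_onD3[OF assms(2)] by blast
    have "p \<subseteq> A" using that partition_onD1[OF assms(2)] by blast
    then show "finite p" using assms(1) by (rule finite_subset)
  qed
  have "card P = (\<Sum>p\<in>P. 1)" by simp
  also have "\<dots> \<le> (\<Sum>p\<in>P. card p)"
    using blocks by (intro sum_mono) (simp add: Suc_leI card_gt_0_iff)
  also have "\<dots> = card A"
    using product_partition[OF assms(2)] blocks by simp
  finally show ?thesis .
qed

lemma separating_partitions_too_many_blocks:
  "finite A \<Longrightarrow> card A < k \<Longrightarrow> separating_partitions A R k = {}"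
  unfolding separating_partitions_def using card_partition_on_le by fastforce

lemma separating_partitions_too_few_blocks:
  assumes "finite A" "R \<subseteq> A" "k < card R"
  shows "separating_partitions A R k = {}"
proof (rule ccontr)
  assume "separating_partitions A R k \<noteq> {}"
  then obtain P where P: "partition_on A P" "card P = k"
    and sep: "\<forall>B\<in>P. \<forall>i\<in>R. \<forall>j\<in>R. i \<in> B \<and> j \<in> B \<longrightarrow> i = j"
    unfolding separating_partitions_def by auto
  define block where "block i = (SOME B. B \<in> P \<and> i \<in> B)" for i
  have block: "block i \<in> P \<and> i \<in> block i" if "i \<in> R" for i
    unfolding block_def
  proof (rule someI_ex)
    show "\<exists>B. B \<in> P \<and> i \<in> B" using that assms(2) partition_onD1[OF P(1)] by blast
  qed
  have "inj_on block R"
    by (rule inj_onI) (metis block sep)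
  moreover have "block ` R \<subseteq> P"
    using block by auto
  ultimately have "card R \<le> card P"
    using finite_elements[OF assms(1) P(1)] by (rule card_inj_on_le)
  then show False
    using P(2) assms(3) by simp
qed

lemma partition_on_insert_singleton_iff:
  assumes "a \<notin> A" "{a} \<notin> Q"
  shows "partition_on (insert a A) (insert {a} Q) \<longleftrightarrow> partition_on A Q"
proof
  assume P: "partition_on (insert a A) (insert {a} Q)"
  have "disjnt {a} (\<Union>Q)"
    using partition_on_block_unique[OF P, of "{a}"] assms(2) by (auto simp: disjnt_def)
  with P assms(1) show "partition_on A Q"
    by (simp add: partition_on_insert)
next
  assume "partition_on A Q"
  moreover from this have "disjnt {a} (\<Union>Q)"
    using assms(1) partition_onD1 by (fastforce simp: disjnt_def)
  ultimately show "partition_on (insert a A) (insert {a} Q)"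
    using assms(1) by (simp add: partition_on_insert)
qed

lemma insert_singleton_mem_separating_partitions_iff:
  assumes "finite A" "a \<notin> A" "a \<notin> R" "{a} \<notin> Q"
  shows "insert {a} Q \<in> separating_partitions (insert a A) R (Suc k) \<longleftrightarrow>
    Q \<in> separating_partitions A R k"
proof -
  have "card (insert {a} Q) = Suc (card Q)" if "partition_on A Q"
    using finite_elements[OF assms(1) that] assms(4) by simp
  then show ?thesis
    unfolding separating_partitions_def
    using partition_on_insert_singleton_iff[OF assms(2,4)] assms(3) by auto
qed

lemma card_separating_partitions_with_singleton:
  assumes "finite A" "a \<notin> A" "a \<notin> R"
  shows "card {P \<in> separating_partitions (insert a A) R (Suc k). {a} \<in> P} =
    card (separating_partitions A R k)"
proof -
  let ?S = "separating_partitions A R k"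
  have no_singleton: "{a} \<notin> Q" if "Q \<in> ?S" for Q
    using that assms(2) partition_onD1 unfolding separating_partitions_def by blast
  have "{P \<in> separating_partitions (insert a A) R (Suc k). {a} \<in> P} = insert {a} ` ?S"
  proof (intro equalityI subsetI)
    fix P assume P: "P \<in> {P \<in> separating_partitions (insert a A) R (Suc k). {a} \<in> P}"
    then have P_eq: "P = insert {a} (P - {{a}})" by auto
    with P have "P - {{a}} \<in> ?S"
      using insert_singleton_mem_separating_partitions_iff[OF assms, of "P - {{a}}" k] by simp
    with P_eq show "P \<in> insert {a} ` ?S"
      by (rule image_eqI)
  next
    fix P assume "P \<in> insert {a} ` ?S"
    then obtain Q where "Q \<in> ?S" "P = insert {a} Q" by blast
    then show "P \<in> {P \<in> separating_partitions (insert a A) R (Suc k). {a} \<in> P}"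
      using no_singleton insert_singleton_mem_separating_partitions_iff[OF assms] by blast
  qed
  moreover have "inj_on (insert {a}) ?S"
  proof (rule inj_onI)
    fix Q Q' assume "Q \<in> ?S" "Q' \<in> ?S" "insert {a} Q = insert {a} Q'"
    then show "Q = Q'"
      using no_singleton by (metis Diff_insert_absorb)
  qed
  ultimately show ?thesis
    by (simp add: card_image)
qed

definition insert_into_block :: "'a \<Rightarrow> 'a set \<Rightarrow> 'a set set \<Rightarrow> 'a set set" where
  "insert_into_block a B Q = insert (insert a B) (Q - {B})"

lemma
  assumes "partition_on A Q" "B \<in> Q" "a \<notin> A"
  shows partition_on_insert_into_block: "partition_on (insert a A) (insert_into_block a B Q)"
    and remove_point_insert_into_block: "(\<lambda>D. D - {a}) ` insert_into_block a B Q = Q"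
    and singleton_notin_insert_into_block: "{a} \<notin> insert_into_block a B Q"
proof -
  have a: "a \<notin> D" if "D \<in> Q" for D
    using that assms(3) partition_onD1[OF assms(1)] by blast
  have nonempty: "D \<noteq> {}" if "D \<in> Q" for D
    using that partition_onD3[OF assms(1)] by blast
  show "partition_on (insert a A) (insert_into_block a B Q)"
  proof (rule partition_onI)
    show "\<Union>(insert_into_block a B Q) = insert a A"
      using partition_onD1[OF assms(1)] assms(2) by (auto simp: insert_into_block_def)
    show "disjnt p q" if "p \<in> insert_into_block a B Q" "q \<in> insert_into_block a B Q" "p \<noteq> q" for p q
      using that a assms(2) partition_on_block_unique[OF assms(1)]
      unfolding insert_into_block_def disjnt_def by blast
    show "{} \<notin> insert_into_block a B Q"
      using nonempty by (auto simp: insert_into_block_def)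
  qed
  show "(\<lambda>D. D - {a}) ` insert_into_block a B Q = Q"
    using a assms(2) by (force simp: insert_into_block_def image_iff)
  show "{a} \<notin> insert_into_block a B Q"
    using a nonempty assms(2) by (auto simp: insert_into_block_def)
qed

lemma
  assumes "partition_on (insert a A) P" "a \<notin> A" "{a} \<notin> P"
  shows partition_on_remove_point: "partition_on A ((\<lambda>D. D - {a}) ` P)"
    and inj_on_remove_point: "inj_on (\<lambda>D. D - {a}) P"
proof -
  have "partition_on (insert a A - {a}) ((\<lambda>D. D - {a}) ` P - {{}})"
    by (rule partition_on_transform[OF assms(1)]) (auto simp: disjnt_def)
  moreover have "{} \<notin> (\<lambda>D. D - {a}) ` P"
    using assms(3) partition_onD3[OF assms(1)] by (auto simp: subset_singleton_iff)
  ultimately show "partition_on A ((\<lambda>D. D - {a}) ` P)"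
    using assms(2) by simp
  show "inj_on (\<lambda>D. D - {a}) P"
  proof (rule inj_onI)
    fix B C assume BC: "B \<in> P" "C \<in> P" "B - {a} = C - {a}"
    then obtain x where "x \<in> B - {a}"
      using \<open>{} \<notin> (\<lambda>D. D - {a}) ` P\<close> by blast
    then show "B = C"
      using BC partition_on_block_unique[OF assms(1) BC(1,2)] by blast
  qed
qed

lemma insert_into_block_remove_point:
  assumes "partition_on (insert a A) P" "C \<in> P" "a \<in> C"
  shows "insert_into_block a (C - {a}) ((\<lambda>D. D - {a}) ` P) = P"
proof -
  have "a \<notin> D" if "D \<in> P - {C}" for D
    using that partition_on_block_unique[OF assms(1) _ assms(2) _ assms(3)] by blast
  then have "(\<lambda>D. D - {a}) ` (P - {C}) = P - {C}"
    by (simp add: image_cong[OF refl, of "P - {C}" "\<lambda>D. D - {a}" id])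
  moreover have "(\<lambda>D. D - {a}) ` P = insert (C - {a}) ((\<lambda>D. D - {a}) ` (P - {C}))"
    using assms(2) by blast
  ultimately have image: "(\<lambda>D. D - {a}) ` P = insert (C - {a}) (P - {C})"
    by simp
  have "C - {a} \<notin> P - {C}"
  proof
    assume "C - {a} \<in> P - {C}"
    then have C': "C - {a} \<in> P" "C - {a} \<noteq> C" by auto
    then obtain x where "x \<in> C - {a}"
      using partition_onD3[OF assms(1)] by (metis all_not_in_conv)
    then have "C - {a} = C"
      using partition_on_block_unique[OF assms(1) C'(1) assms(2)] by blast
    with C'(2) show False ..
  qed
  then show ?thesis
    unfolding image insert_into_block_def using assms(2,3) by (simp add: insert_absorb)
qed

lemma insert_into_block_mem_separating_partitions:
  assumes "finite A" "a \<notin> A" "a \<notin> R" "Q \<in> separating_partitions A R k" "B \<in> Q"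
  shows "insert_into_block a B Q \<in> separating_partitions (insert a A) R k"
proof -
  have Q: "partition_on A Q" "card Q = k"
    and sep: "\<forall>D\<in>Q. \<forall>i\<in>R. \<forall>j\<in>R. i \<in> D \<and> j \<in> D \<longrightarrow> i = j"
    using assms(4) unfolding separating_partitions_def by auto
  have "insert a B \<notin> Q - {B}"
    using assms(2) partition_onD1[OF Q(1)] by blast
  moreover have "finite Q"
    using finite_elements[OF assms(1) Q(1)] .
  ultimately have "card (insert_into_block a B Q) = k"
    using assms(5) Q(2) card_gt_0_iff[of Q]
    by (auto simp: insert_into_block_def card_Diff_singleton)
  moreover have "\<forall>D\<in>insert_into_block a B Q. \<forall>i\<in>R. \<forall>j\<in>R. i \<in> D \<and> j \<in> D \<longrightarrow> i = j"
    using sep assms(3,5) by (auto simp: insert_into_block_def)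
  ultimately show ?thesis
    using partition_on_insert_into_block[OF Q(1) assms(5,2)]
    unfolding separating_partitions_def by blast
qed

lemma remove_point_mem_separating_partitions:
  assumes "a \<notin> A" "P \<in> separating_partitions (insert a A) R k" "{a} \<notin> P"
  shows "(\<lambda>D. D - {a}) ` P \<in> separating_partitions A R k"
proof -
  have P: "partition_on (insert a A) P" "card P = k"
    and sep: "\<forall>D\<in>P. \<forall>i\<in>R. \<forall>j\<in>R. i \<in> D \<and> j \<in> D \<longrightarrow> i = j"
    using assms(2) unfolding separating_partitions_def by auto
  have "card ((\<lambda>D. D - {a}) ` P) = k"
    using card_image[OF inj_on_remove_point[OF P(1) assms(1,3)]] P(2) by simp
  moreover have "\<forall>D\<in>(\<lambda>D. D - {a}) ` P. \<forall>i\<in>R. \<forall>j\<in>R. i \<in> D \<and> j \<in> D \<longrightarrow> i = j"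
    using sep by blast
  ultimately show ?thesis
    using partition_on_remove_point[OF P(1) assms(1,3)]
    unfolding separating_partitions_def by blast
qed

lemma inj_on_insert_into_block:
  assumes "partition_on A Q" "a \<notin> A"
  shows "inj_on (\<lambda>B. insert_into_block a B Q) Q"
proof (rule inj_onI)
  fix B B' assume B: "B \<in> Q" "B' \<in> Q" "insert_into_block a B Q = insert_into_block a B' Q"
  have "insert a B \<in> insert_into_block a B' Q" "insert a B' \<in> insert_into_block a B' Q"
    using B(3) unfolding insert_into_block_def by blast+
  then have "insert a B = insert a B'"
    using partition_on_block_unique[OF partition_on_insert_into_block[OF assms(1) B(2) assms(2)]]
    by blast
  moreover have "a \<notin> B" "a \<notin> B'"
    using B(1,2) assms(2) partition_onD1[OF assms(1)] by blast+
  ultimately show "B = B'"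
    by (metis Diff_insert_absorb)
qed

lemma separating_partitions_without_singleton_eq_UN:
  assumes "finite A" "a \<notin> A" "a \<notin> R"
  shows "{P \<in> separating_partitions (insert a A) R k. {a} \<notin> P} =
    (\<Union>Q\<in>separating_partitions A R k. (\<lambda>B. insert_into_block a B Q) ` Q)"
proof (intro equalityI subsetI)
  fix P assume "P \<in> {P \<in> separating_partitions (insert a A) R k. {a} \<notin> P}"
  then have P: "P \<in> separating_partitions (insert a A) R k" "{a} \<notin> P" by auto
  then have part: "partition_on (insert a A) P"
    unfolding separating_partitions_def by blast
  then obtain C where C: "C \<in> P" "a \<in> C"
    using partition_onD1 by blast
  have "P \<in> (\<lambda>B. insert_into_block a B ((\<lambda>D. D - {a}) ` P)) ` ((\<lambda>D. D - {a}) ` P)"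
    using insert_into_block_remove_point[OF part C, symmetric] C(1) by blast
  then show "P \<in> (\<Union>Q\<in>separating_partitions A R k. (\<lambda>B. insert_into_block a B Q) ` Q)"
    using remove_point_mem_separating_partitions[OF assms(2) P] by blast
next
  fix P assume "P \<in> (\<Union>Q\<in>separating_partitions A R k. (\<lambda>B. insert_into_block a B Q) ` Q)"
  then obtain Q B where Q: "Q \<in> separating_partitions A R k" "B \<in> Q"
    and P: "P = insert_into_block a B Q"
    by blast
  have "partition_on A Q"
    using Q(1) unfolding separating_partitions_def by blast
  then show "P \<in> {P \<in> separating_partitions (insert a A) R k. {a} \<notin> P}"
    unfolding P
    using insert_into_block_mem_separating_partitions[OF assms Q]
      singleton_notin_insert_into_block[OF _ Q(2) assms(2)] by simp
qed

lemma card_separating_partitions_without_singleton: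
  assumes "finite A" "a \<notin> A" "a \<notin> R"
  shows "card {P \<in> separating_partitions (insert a A) R k. {a} \<notin> P} =
    k * card (separating_partitions A R k)"
proof -
  let ?S = "separating_partitions A R k"
  let ?extensions = "\<lambda>Q. (\<lambda>B. insert_into_block a B Q) ` Q"
  have partition: "partition_on A Q" if "Q \<in> ?S" for Q
    using that unfolding separating_partitions_def by blast
  have card_extensions: "card (?extensions Q) = k" if "Q \<in> ?S" for Q
  proof -
    have "card (?extensions Q) = card Q"
      by (rule card_image[OF inj_on_insert_into_block[OF partition[OF that] assms(2)]])
    also have "card Q = k"
      using that unfolding separating_partitions_def by blast
    finally show ?thesis .
  qed
  have disjoint: "?extensions Q \<inter> ?extensions Q' = {}"
    if Q: "Q \<in> ?S" and Q': "Q' \<in> ?S" and "Q \<noteq> Q'" for Q Q'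
  proof (rule ccontr)
    assume "?extensions Q \<inter> ?extensions Q' \<noteq> {}"
    then obtain B B' where "B \<in> Q" "B' \<in> Q'" "insert_into_block a B Q = insert_into_block a B' Q'"
      by blast
    then have "Q = Q'"
      using remove_point_insert_into_block[OF partition[OF Q] _ assms(2)]
        remove_point_insert_into_block[OF partition[OF Q'] _ assms(2)] by metis
    with \<open>Q \<noteq> Q'\<close> show False ..
  qed
  have finite: "finite (?extensions Q)" if "Q \<in> ?S" for Q
    using finite_elements[OF assms(1) partition[OF that]] by blast
  have "card (\<Union>Q\<in>?S. ?extensions Q) = (\<Sum>Q\<in>?S. card (?extensions Q))"
    by (rule card_UN_disjoint) (use finite_separating_partitions[OF assms(1)] finite disjoint in auto)
  also have "\<dots> = k * card ?S"
    using card_extensions by simp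
  finally show ?thesis
    unfolding separating_partitions_without_singleton_eq_UN[OF assms] .
qed

lemma card_separating_partitions_insert:
  assumes "finite A" "a \<notin> A" "a \<notin> R"
  shows "card (separating_partitions (insert a A) R (Suc k)) =
    card (separating_partitions A R k) + Suc k * card (separating_partitions A R (Suc k))"
proof -
  let ?X = "separating_partitions (insert a A) R (Suc k)"
  have "card ?X = card (?X \<inter> {P. {a} \<in> P}) + card (?X - {P. {a} \<in> P})"
    by (rule card_Int_Diff) (simp add: assms(1) finite_separating_partitions)
  also have "?X \<inter> {P. {a} \<in> P} = {P \<in> ?X. {a} \<in> P}"
    by blast
  also have "?X - {P. {a} \<in> P} = {P \<in> ?X. {a} \<notin> P}"
    by blast
  finally show ?thesis
    using card_separating_partitions_with_singleton[OF assms]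
      card_separating_partitions_without_singleton[OF assms] by simp
qed

section \<open>r-Stirling numbers\<close>

lemma r_stirling_eq_card_separating_partitions:
  "r_stirling r n k = card (separating_partitions {1..n+r} {1..r} (k + r))"
  unfolding r_stirling_def separating_partitions_def by simp

lemma r_stirling_eq_0: "n < k \<Longrightarrow> r_stirling r n k = 0"
  unfolding r_stirling_eq_card_separating_partitions
  by (simp add: separating_partitions_too_many_blocks)

lemma r_stirling_Suc_0:
  assumes "r \<ge> 1"
  shows "r_stirling r (Suc n) 0 = r * r_stirling r n 0"
proof -
  obtain q where r: "r = Suc q"
    using assms by (cases r) auto
  have "separating_partitions {1..n+r} {1..r} q = {}"
    by (rule separating_partitions_too_few_blocks) (auto simp: r)
  moreover have "{1..Suc n + r} = insert (Suc n + r) {1..n+r}"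
    by auto
  ultimately show ?thesis
    unfolding r_stirling_eq_card_separating_partitions
    by (simp add: r card_separating_partitions_insert)
qed

lemma r_stirling_Suc_Suc:
  "r_stirling r (Suc n) (Suc k) = r_stirling r n k + (Suc k + r) * r_stirling r n (Suc k)"
proof -
  have "{1..Suc n + r} = insert (Suc n + r) {1..n+r}"
    by auto
  then show ?thesis
    unfolding r_stirling_eq_card_separating_partitions
    by (simp add: card_separating_partitions_insert)
qed

lemma sum_r_stirling_Suc:
  fixes f :: "nat \<Rightarrow> 'a::comm_semiring_1"
  assumes "r \<ge> 1"
  shows "(\<Sum>k\<le>Suc n. of_nat (r_stirling r (Suc n) k) * f k) =
    (\<Sum>k\<le>n. of_nat (r_stirling r n k) * (f (Suc k) + of_nat (k + r) * f k))"
proof -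
  let ?S = "\<lambda>k. of_nat (r_stirling r n k) :: 'a"
  have "(\<Sum>k\<le>Suc n. of_nat (r_stirling r (Suc n) k) * f k) =
      of_nat r * ?S 0 * f 0 + (\<Sum>k\<le>n. (?S k + of_nat (Suc k + r) * ?S (Suc k)) * f (Suc k))"
    unfolding sum.atMost_Suc_shift by (simp add: r_stirling_Suc_0[OF assms] r_stirling_Suc_Suc algebra_simps)
  also have "\<dots> = (\<Sum>k\<le>n. ?S k * f (Suc k)) + (\<Sum>k\<le>Suc n. of_nat (k + r) * ?S k * f k)"
    unfolding sum.atMost_Suc_shift by (simp add: sum.distrib algebra_simps)
  also have "(\<Sum>k\<le>Suc n. of_nat (k + r) * ?S k * f k) = (\<Sum>k\<le>n. of_nat (k + r) * ?S k * f k)"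
    by (simp add: r_stirling_eq_0)
  finally show ?thesis
    by (simp add: sum.distrib algebra_simps)
qed

lemma alternating_derangement_Suc:
  "(-1) ^ Suc p * int (derangement (Suc p)) + int (Suc p) * ((-1) ^ p * int (derangement p)) = 1"
  by (cases "even p") (simp_all add: derangement_Suc algebra_simps)

theorem corollary1:
  fixes n r :: nat
  assumes "n \<ge> 1" and "r \<ge> 1"
  shows "(\<Sum>k=0..n. int (r_stirling r n k) * (-1) ^ (k + r - 1) * int (derangement (k + r - 1)))
         = int (r_bell (n - 1) r)"
proof -
  obtain m where n: "n = Suc m"
    using assms(1) by (cases n) auto
  define f where "f k = (-1) ^ (k + r - 1) * int (derangement (k + r - 1))" for k
  have f_step: "f (Suc k) + int (k + r) * f k = 1" for k
  proof -
    have "k + r = Suc (k + r - 1)"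
      using assms(2) by simp
    then show ?thesis
      unfolding f_def using alternating_derangement_Suc[of "k + r - 1"] by simp
  qed
  have "(\<Sum>k=0..n. int (r_stirling r n k) * (-1) ^ (k + r - 1) * int (derangement (k + r - 1)))
      = (\<Sum>k\<le>Suc m. int (r_stirling r (Suc m) k) * f k)"
    unfolding n f_def atLeast0AtMost by (simp add: mult.assoc)
  also have "\<dots> = (\<Sum>k\<le>m. int (r_stirling r m k))"
    using sum_r_stirling_Suc[OF assms(2), of m f] f_step by simp
  also have "\<dots> = int (r_bell (n - 1) r)"
    unfolding r_bell_def n by simp
  finally show ?thesis .
qed

end
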